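(* Let $b\in[0,1]$ with $b\neq\frac12$, and define $f_b:[0,1]\to[0,1]$ by $$f_b(x)=\begin{cases} x, & x\in[0,\frac13]\cup[\frac23,1],\\ (1-2b)x^2+2bx, & x\in(\frac13,\frac23).\end{cases}$$ Let $f_b^n$ denote the $n$-fold composition of $f_b$ with itself. Then: 1. The set of fixed points of $f_b$ is $[0,\frac13]\cup[\frac23,1]$. 2. If $0\le b<\frac12$, then for every $x^{(0)}\in(\frac13,\frac23)$ there exist $n\in\mathbb N$ and $p\in[\frac19(1+4b),\frac13]$ such that $f_b^n(x^{(0)})=p$ and $f_b^{n+1}(x^{(0)})=f_b(p)=p$. 3. If $\frac12<b\le1$, then for every $x^{(0)}\in(\frac13,\frac23)$ there exist $n\in\mathbb N$ and $p\in[\frac23,\frac49(1+b)]$ such that $f_b^n(x^{(0)})=p$ and $f_b^{n+1}(x^{(0)})=f_b(p)=p$.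
   Context: This map is the reduction to $[0,1]$ of the quadratic stochastic operator $x'=x^2+2p(x)xy$, $y'=2(1-p(x))xy+y^2$ (with $y=1-x$), where $p(x)=a$ for $x\le\frac13$, $b$ for $\frac13<x<\frac23$, $c$ for $x\ge\frac23$, in the case $a=c=\frac12$. *)

theory Defs
  imports Complex_Main
begin

text \<open>The map f_b on [0,1] (defined on all reals; only its values on [0,1] matter).\<close>
definition fb :: "real \<Rightarrow> real \<Rightarrow> real" where
  "fb b x = (if x \<in> {0..1/3} \<union> {2/3..1} then x else (1 - 2*b) * x^2 + 2*b*x)"

end

theory Submission
  imports Defs
begin

(* On the middle interval, f_b x - x = (2b - 1) x (1 - x) with x (1 - x) \<ge> 2/9, so every step
   moves a middle point by at least |2b - 1| 2/9, downwards for b < 1/2 and upwards for b > 1/2.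
   Hence the orbit leaves (1/3, 2/3) after finitely many steps and lands on a fixed point. Being
   the image of a middle point, and f_b being increasing on [1/3, 2/3] with f_b(1/3) = (1 + 4b)/9
   and f_b(2/3) = 4(1 + b)/9, the landing point lies in the stated interval. *)

lemma funpow_escapes:
  fixes f :: "'a \<Rightarrow> 'a" and V :: "'a \<Rightarrow> real"
  assumes "\<delta> > 0"
    and bounded: "\<And>y. y \<in> M \<Longrightarrow> c \<le> V y"
    and descent: "\<And>y. y \<in> M \<Longrightarrow> V (f y) \<le> V y - \<delta>"
    and "x \<in> M"
  shows "\<exists>n. (f ^^ n) x \<in> M \<and> (f ^^ Suc n) x \<notin> M"
proof (rule ccontr)
  assume "\<not> ?thesis"
  then have stays: "(f ^^ n) x \<in> M" for n
    using \<open>x \<in> M\<close> by (induction n) auto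
  have decay: "V ((f ^^ n) x) \<le> V x - real n * \<delta>" for n
  proof (induction n)
    case (Suc n)
    then show ?case
      using descent[OF stays[of n]] by (simp add: algebra_simps)
  qed simp
  obtain n :: nat where "V x - c < real n * \<delta>"
    using \<open>\<delta> > 0\<close> reals_Archimedean3 by blast
  then show False
    using decay[of n] bounded[OF stays[of n]] by linarith
qed

lemma fb_middle: "x \<in> {1/3<..<2/3} \<Longrightarrow> fb b x = (1 - 2*b) * x^2 + 2*b*x"
  unfolding fb_def by auto

lemma fb_fixed: "x \<in> {0..1/3} \<union> {2/3..1} \<Longrightarrow> fb b x = x"
  unfolding fb_def by auto

lemma fb_middle_minus_id:
  "x \<in> {1/3<..<2/3} \<Longrightarrow> fb b x - x = (2*b - 1) * (x * (1 - x))"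
  by (simp add: fb_middle algebra_simps power2_eq_square)

lemma middle_product_ge:
  fixes x :: real
  assumes "x \<in> {1/3<..<2/3}"
  shows "2/9 \<le> x * (1 - x)"
proof -
  have "0 \<le> (x - 1/3) * (2/3 - x)"
    using assms by auto
  moreover have "(x - 1/3) * (2/3 - x) = x * (1 - x) - 2/9"
    by (simp add: field_simps)
  ultimately show ?thesis
    by linarith
qed

lemma fb_middle_bounds:
  fixes b x :: real
  assumes "0 \<le> b" "b \<le> 1" "x \<in> {1/3<..<2/3}"
  shows "(1 + 4*b)/9 < fb b x" and "fb b x < 4/9 * (1 + b)"
proof -
  have "fb b x - (1 + 4*b)/9 = (x - 1/3) * ((x + 1/3) + 2*b * (2/3 - x))"
    using assms(3) by (simp add: fb_middle power2_eq_square field_simps)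
  moreover have "0 < (x - 1/3) * ((x + 1/3) + 2*b * (2/3 - x))"
    using assms by (intro mult_pos_pos add_pos_nonneg) auto
  ultimately show "(1 + 4*b)/9 < fb b x"
    by linarith
  have "4/9 * (1 + b) - fb b x = (2/3 - x) * ((x + 2/3) - 2*b * (x - 1/3))"
    using assms(3) by (simp add: fb_middle power2_eq_square field_simps)
  moreover have "2*b * (x - 1/3) \<le> 2 * (x - 1/3)"
    using assms by (intro mult_right_mono) auto
  then have "0 < (2/3 - x) * ((x + 2/3) - 2*b * (x - 1/3))"
    using assms(3) by (intro mult_pos_pos) auto
  ultimately show "fb b x < 4/9 * (1 + b)"
    by linarith
qed

lemma fb_fixed_points:
  fixes b :: real
  assumes "b \<noteq> 1/2"
  shows "{x \<in> {0..1}. fb b x = x} = {0..1/3} \<union> {2/3..1}"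
proof -
  have "fb b x \<noteq> x" if "x \<in> {1/3<..<2/3}" for x
  proof -
    have "(2*b - 1) * (x * (1 - x)) \<noteq> 0"
      using assms that by auto
    then show ?thesis
      using fb_middle_minus_id[OF that, where b = b] by auto
  qed
  then show ?thesis
    using fb_fixed by force
qed

lemma fb_orbit_lands_low:
  fixes b x0 :: real
  assumes "0 \<le> b" "b < 1/2" "x0 \<in> {1/3<..<2/3}"
  shows "\<exists>n. \<exists>p \<in> {(1 + 4*b)/9..1/3}. (fb b ^^ n) x0 = p \<and> fb b p = p"
proof -
  define \<delta> where "\<delta> = (1 - 2*b) * (2/9)"
  have "0 < \<delta>"
    using assms(2) by (simp add: \<delta>_def)
  have step: "fb b y \<le> y - \<delta>" if "y \<in> {1/3<..<2/3}" for y
    using fb_middle_minus_id[OF that, where b = b] middle_product_ge[OF that] assms(2)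
      mult_left_mono[of "2/9" "y * (1 - y)" "1 - 2*b"]
    by (simp add: \<delta>_def algebra_simps)
  obtain n where inside: "(fb b ^^ n) x0 \<in> {1/3<..<2/3}"
    and outside: "(fb b ^^ Suc n) x0 \<notin> {1/3<..<2/3}"
    using funpow_escapes[where V = "\<lambda>y. y" and c = "1/3", OF \<open>0 < \<delta>\<close> _ step assms(3)]
    by auto
  define p where "p = (fb b ^^ Suc n) x0"
  have "p < 2/3" and "(1 + 4*b)/9 < p"
    using inside step[OF inside] \<open>0 < \<delta>\<close> fb_middle_bounds(1)[OF assms(1) _ inside] assms(2)
    by (simp_all add: p_def)
  then have "p \<in> {(1 + 4*b)/9..1/3}"
    using outside by (auto simp: p_def)
  moreover have "fb b p = p"
    using calculation assms(1) by (intro fb_fixed) auto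
  ultimately show ?thesis
    unfolding p_def by blast
qed

lemma fb_orbit_lands_high:
  fixes b x0 :: real
  assumes "1/2 < b" "b \<le> 1" "x0 \<in> {1/3<..<2/3}"
  shows "\<exists>n. \<exists>p \<in> {2/3..4/9 * (1 + b)}. (fb b ^^ n) x0 = p \<and> fb b p = p"
proof -
  define \<delta> where "\<delta> = (2*b - 1) * (2/9)"
  have "0 < \<delta>"
    using assms(1) by (simp add: \<delta>_def)
  have step: "y + \<delta> \<le> fb b y" if "y \<in> {1/3<..<2/3}" for y
    using fb_middle_minus_id[OF that, where b = b] middle_product_ge[OF that] assms(1)
      mult_left_mono[of "2/9" "y * (1 - y)" "2*b - 1"]
    by (simp add: \<delta>_def algebra_simps)
  obtain n where inside: "(fb b ^^ n) x0 \<in> {1/3<..<2/3}"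
    and outside: "(fb b ^^ Suc n) x0 \<notin> {1/3<..<2/3}"
    using funpow_escapes[where V = uminus and c = "-2/3" and f = "fb b", OF \<open>0 < \<delta>\<close> _ _ assms(3)]
      step by force
  define p where "p = (fb b ^^ Suc n) x0"
  have "1/3 < p" and "p < 4/9 * (1 + b)"
    using inside step[OF inside] \<open>0 < \<delta>\<close> fb_middle_bounds(2)[OF _ assms(2) inside] assms(1)
    by (simp_all add: p_def)
  then have "p \<in> {2/3..4/9 * (1 + b)}"
    using outside by (auto simp: p_def)
  moreover have "fb b p = p"
    using calculation assms(2) by (intro fb_fixed) auto
  ultimately show ?thesis
    unfolding p_def by blast
qed

theorem theorem2p2:
  fixes b :: real
  assumes "0 \<le> b" and "b \<le> 1" and "b \<noteq> 1/2"
  shows "{x \<in> {0..1}. fb b x = x} = {0..1/3} \<union> {2/3..1}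
    \<and> (b < 1/2 \<longrightarrow> (\<forall>x0 \<in> {1/3<..<2/3}. \<exists>n::nat. \<exists>p \<in> {(1 + 4*b)/9..1/3}.
           (fb b ^^ n) x0 = p \<and> (fb b ^^ Suc n) x0 = fb b p \<and> fb b p = p))
    \<and> (1/2 < b \<longrightarrow> (\<forall>x0 \<in> {1/3<..<2/3}. \<exists>n::nat. \<exists>p \<in> {2/3..4/9*(1 + b)}.
           (fb b ^^ n) x0 = p \<and> (fb b ^^ Suc n) x0 = fb b p \<and> fb b p = p))"
  using fb_fixed_points[OF assms(3)]
    fb_orbit_lands_low[OF assms(1)] fb_orbit_lands_high[OF _ assms(2)]
  by fastforce

end
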